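(* Let $\kappa$ be a regular infinite cardinal and let $\langle W^\kappa,(T_i)_{i\in\{a,b\}},\theta\rangle$ be the $*$-type space described in the context. Then: (i) $\{h\}^{W^\kappa}=[X_0^\kappa=h]$, $\{t\}^{W^\kappa}=[X_0^\kappa=t]$, and $\mathrm{dp}(\{h\})=\mathrm{dp}(\{t\})=0$; (ii) for every $i\in\{a,b\}$ and $0\le\beta<\kappa$ there are $\kappa$-expressions $\varphi_i^0(\beta),\varphi_i^1(\beta)$ of depth $\beta+1$ with $(\varphi_i^1(\beta))^{W^\kappa}=[X_i^\kappa(\beta)=1]$ and $(\varphi_i^0(\beta))^{W^\kappa}=[X_i^\kappa(\beta)=0]$; (iii) for every $i\in\{a,b\}$ and limit ordinal $\lambda<\kappa$ there are $\kappa$-expressions $\varphi_i^{\rm even}(\lambda),\varphi_i^{\rm odd}(\lambda)$ of depth $\lambda$ with $(\varphi_i^{\rm even}(\lambda))^{W^\kappa}=[\lambda\text{-par}(X_i^\kappa)=\text{even}]$ and $(\varphi_i^{\rm odd}(\lambda))^{W^\kappa}=[\lambda\text{-par}(X_i^\kappa)=\text{odd}]$.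
   Context: Records: for $\alpha\ge1$, a record of length $\alpha$ is $r\in\{0,1\}^\alpha$ such that for every limit $\lambda\le\alpha$ there is $\gamma<\lambda$ with $r(\beta)=0$ for $\gamma\le\beta<\lambda$. Parity: finite ordinals usual (0 even); infinite $\hat\lambda+n$ ($\hat\lambda$ limit) has the parity of $n$. For limit $\lambda\le\alpha$, $o^\lambda(r)$ is the least ordinal $<\lambda$ after which $r$ is $0$ below $\lambda$; $\lambda\text{-par}(r)$ is its parity. $W^0=\{h,t\}$; $W^\alpha$ ($\alpha\ge1$) = triples $(w_0,w_a^\alpha,w_b^\alpha)$, $w_0\in\{h,t\}$, $w_a^\alpha,w_b^\alpha$ records of length $\alpha$; $w^\alpha\upharpoonright\beta$ restricts both records (and $w^\alpha\upharpoonright0=w_0$); $\pi_{\beta,\alpha}(w^\alpha)=w^\alpha\upharpoonright\beta$. For $i\in\{a,b\}$, $j$ the other player, $P_i(w^\alpha)$: set of $v^\alpha$ with $v_i^\alpha=w_i^\alpha$; $w_i^\alpha(0)=1\Rightarrow v_0=w_0$; $w_i^\alpha(\beta+1)=1\Rightarrow v_j^\alpha(\beta)=w_j^\alpha(\beta)$ ($\beta+1<\alpha$); $w_i^\alpha(\lambda)=1\Rightarrow\lambda\text{-par}(v_j^\alpha)=\lambda\text{-par}(w_j^\alpha)$ (limit $\lambda<\alpha$). $T_a,T_b$ map $W^\kappa$ into finitely additive probability measures on $\mathrm{Pow}(W^\kappa)$ and satisfy for all $w^\kappa$: (a) $T_i$ constant on $P_i(w^\kappa)$; (b) $T_i(w^\kappa)(P_i(w^\kappa))=1$;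 (c) $T_i(w^\kappa)([X_0^\kappa=w_0])=1$ if $w_i^\kappa(0)=1$, $\frac12$ otherwise; (d) for $\beta<\kappa$, $T_i(w^\kappa)([X_j^\kappa(\beta)=w_j^\kappa(\beta)])=1$ if $w_i^\kappa(\beta+1)=1$, $\frac12$ otherwise; (e) for limit $\lambda<\kappa$, $T_i(w^\kappa)([\lambda\text{-par}(X_j^\kappa)=\lambda\text{-par}(w_j^\kappa)])=1$ if $w_i^\kappa(\lambda)=1$, $\frac12$ otherwise; (f) for $\beta<\alpha<\kappa$, $E^\beta\subseteq W^\beta$, $u^\kappa\upharpoonright\alpha=w^\kappa\upharpoonright\alpha$ implies equal $T_i$-values on $\pi_{\beta,\kappa}^{-1}(E^\beta)$. $\theta(w^\kappa)=w_0$. Notation: $[X_0^\kappa=c]=\{u:u_0=c\}$, $[X_i^\kappa(\beta)=c]=\{u:u_i^\kappa(\beta)=c\}$, $[\lambda\text{-par}(X_i^\kappa)=e]=\{u:\lambda\text{-par}(u_i^\kappa)=e\}$. $\kappa$-expressions over $\Sigma_S=\mathrm{Pow}(\{h,t\})$, $I=\{a,b\}$: least set containing each $E\subseteq\{h,t\}$ and closed under $\neg$, $B_i^p$ ($p\in[0,1]$), and conjunctions of fewer than $\kappa$ (nonempty) expressions. Semantics: $E^{W^\kappa}=\theta^{-1}(E)$, complement, $(B_i^p\varphi)^{W^\kappa}=\{w:T_i(w)(\varphi^{W^\kappa})\ge p\}$, intersection. Depth: $\mathrm{dp}(E)=0$, $\mathrm{dp}(\neg\varphi)=\mathrm{dp}(\varphi)$,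 $\mathrm{dp}(B_i^p\varphi)=\mathrm{dp}(\varphi)+1$, $\mathrm{dp}(\bigwedge\Psi)=\sup_{\varphi\in\Psi}\mathrm{dp}(\varphi)$. *)

theory Defs
  imports Complex_Main "HOL-Library.Equipollence"
begin

text \<open>kappa is represented by a type 'k with a well-order whose order type is kappa:
  the elements of 'k are the ordinals below kappa.\<close>

definition regular_infinite_cardinal :: "'k::wellorder itself \<Rightarrow> bool" where
  "regular_infinite_cardinal _ \<longleftrightarrow>
     infinite (UNIV :: 'k set)
   \<and> (\<forall>x::'k. {y. y < x} \<prec> (UNIV :: 'k set))
   \<and> (\<forall>S::'k set. S \<prec> (UNIV :: 'k set) \<longrightarrow> (\<exists>x. \<forall>y\<in>S. y < x))"

definition ord0 :: "'k::wellorder" where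
  "ord0 = (LEAST x. True)"

definition osucc :: "'k::wellorder \<Rightarrow> 'k" where
  "osucc x = (LEAST y. x < y)"

definition is_successor :: "'k::wellorder \<Rightarrow> bool" where
  "is_successor y \<longleftrightarrow> (\<exists>x. x < y \<and> \<not> (\<exists>z. x < z \<and> z < y))"

definition is_limit :: "'k::wellorder \<Rightarrow> bool" where
  "is_limit l \<longleftrightarrow> (\<exists>g. g < l) \<and> \<not> is_successor l"

definition ord_even :: "'k::wellorder \<Rightarrow> bool" where
  "ord_even x \<longleftrightarrow> (\<exists>l n. \<not> is_successor l \<and> x = (osucc ^^ n) l \<and> even n)"

definition is_record :: "('k::wellorder \<Rightarrow> bool) \<Rightarrow> bool" where
  "is_record r \<longleftrightarrow>
     (\<forall>l. is_limit l \<longrightarrow> (\<exists>g<l. \<forall>b. g \<le> b \<and> b < l \<longrightarrow> \<not> r b))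
   \<and> (\<exists>g. \<forall>b. g \<le> b \<longrightarrow> \<not> r b)"  \<comment> \<open>the case lambda = kappa\<close>

definition o_lim :: "'k::wellorder \<Rightarrow> ('k \<Rightarrow> bool) \<Rightarrow> 'k" where
  "o_lim l r = (LEAST g. g < l \<and> (\<forall>b. g \<le> b \<and> b < l \<longrightarrow> \<not> r b))"

definition lpar_even :: "'k::wellorder \<Rightarrow> ('k \<Rightarrow> bool) \<Rightarrow> bool" where
  "lpar_even l r = ord_even (o_lim l r)"

datatype coin = Hd | Tl
datatype agent = Ag_a | Ag_b

fun other :: "agent \<Rightarrow> agent" where
  "other Ag_a = Ag_b" | "other Ag_b = Ag_a"

type_synonym 'k world = "coin \<times> ('k \<Rightarrow> bool) \<times> ('k \<Rightarrow> bool)"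

definition W :: "'k::wellorder world set" where
  "W = {w. is_record (fst (snd w)) \<and> is_record (snd (snd w))}"

fun X :: "agent \<Rightarrow> 'k world \<Rightarrow> 'k \<Rightarrow> bool" where
  "X Ag_a w = fst (snd w)" | "X Ag_b w = snd (snd w)"

text \<open>Restriction w|beta, representing W^beta inside the same type by padding with zeros;
  for beta = 0 this is just the coin w_0.\<close>
definition restr :: "'k::wellorder \<Rightarrow> 'k world \<Rightarrow> 'k world" where
  "restr b w = (fst w, \<lambda>g. g < b \<and> fst (snd w) g, \<lambda>g. g < b \<and> snd (snd w) g)"

definition P :: "agent \<Rightarrow> 'k::wellorder world \<Rightarrow> 'k world set" where
  "P i w = {v \<in> W. X i v = X i w
      \<and> (X i w ord0 \<longrightarrow> fst v = fst w)
      \<and> (\<forall>b. X i w (osucc b) \<longrightarrow> X (other i) v b = X (other i) w b)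
      \<and> (\<forall>l. is_limit l \<and> X i w l \<longrightarrow> lpar_even l (X (other i) v) = lpar_even l (X (other i) w))}"

definition fa_prob :: "'a set \<Rightarrow> ('a set \<Rightarrow> real) \<Rightarrow> bool" where
  "fa_prob \<Omega> \<mu> \<longleftrightarrow> \<mu> \<Omega> = 1 \<and> (\<forall>A\<subseteq>\<Omega>. 0 \<le> \<mu> A)
     \<and> (\<forall>A B. A \<subseteq> \<Omega> \<and> B \<subseteq> \<Omega> \<and> A \<inter> B = {} \<longrightarrow> \<mu> (A \<union> B) = \<mu> A + \<mu> B)"

definition half_or_one :: "bool \<Rightarrow> real" where
  "half_or_one c = (if c then 1 else 1/2)"

definition star_type_space :: "(agent \<Rightarrow> 'k::wellorder world \<Rightarrow> 'k world set \<Rightarrow> real) \<Rightarrow> bool" where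
  "star_type_space T \<longleftrightarrow> (\<forall>i. \<forall>w\<in>W.
      fa_prob W (T i w)
    \<and> (\<forall>v\<in>P i w. T i v = T i w)
    \<and> T i w (P i w) = 1
    \<and> T i w {u\<in>W. fst u = fst w} = half_or_one (X i w ord0)
    \<and> (\<forall>b. T i w {u\<in>W. X (other i) u b = X (other i) w b} = half_or_one (X i w (osucc b)))
    \<and> (\<forall>l. is_limit l \<longrightarrow>
          T i w {u\<in>W. lpar_even l (X (other i) u) = lpar_even l (X (other i) w)} = half_or_one (X i w l))
    \<and> (\<forall>b a E u. b < a \<and> E \<subseteq> restr b ` W \<and> u \<in> W \<and> restr a u = restr a w \<longrightarrow>
          T i u {v\<in>W. restr b v \<in> E} = T i w {v\<in>W. restr b v \<in> E}))"

text \<open>A conjunction of fewer than kappa expressions is given by a nonempty index set S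
  of size < kappa and a family f indexed by S.\<close>
datatype 'k kexp = Prim "coin set" | Neg "'k kexp" | Bel agent real "'k kexp"
  | Conj "'k set" "'k \<Rightarrow> 'k kexp"

inductive kexp_wf :: "'k::wellorder kexp \<Rightarrow> bool" where
  "kexp_wf (Prim E)"
| "kexp_wf \<phi> \<Longrightarrow> kexp_wf (Neg \<phi>)"
| "kexp_wf \<phi> \<Longrightarrow> 0 \<le> p \<Longrightarrow> p \<le> 1 \<Longrightarrow> kexp_wf (Bel i p \<phi>)"
| "S \<noteq> {} \<Longrightarrow> S \<prec> (UNIV :: 'k set) \<Longrightarrow> (\<forall>g\<in>S. kexp_wf (f g)) \<Longrightarrow> kexp_wf (Conj S f)"

primrec sem :: "(agent \<Rightarrow> 'k::wellorder world \<Rightarrow> 'k world set \<Rightarrow> real) \<Rightarrow> 'k kexp \<Rightarrow> 'k world set" where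
  "sem T (Prim E) = {w\<in>W. fst w \<in> E}"
| "sem T (Neg \<phi>) = W - sem T \<phi>"
| "sem T (Bel i p \<phi>) = {w\<in>W. p \<le> T i w (sem T \<phi>)}"
| "sem T (Conj S f) = W \<inter> (\<Inter>g\<in>S. sem T (f g))"

primrec dp :: "'k::wellorder kexp \<Rightarrow> 'k" where
  "dp (Prim E) = ord0"
| "dp (Neg \<phi>) = dp \<phi>"
| "dp (Bel i p \<phi>) = osucc (dp \<phi>)"
| "dp (Conj S f) = (LEAST x. \<forall>g\<in>S. dp (f g) \<le> x)"

end

theory Submission
  imports Defs
begin

text \<open>
  Agent \<open>i\<close> is sure whether an event \<open>A\<close> holds, i.e. \<open>B\<^sub>i\<^sup>1 A \<or> B\<^sub>i\<^sup>1 \<not>A\<close>, exactly when she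
  gives probability 1 to the event "\<open>A\<close> holds iff it holds at the actual world"; by the
  defining conditions of the \<open>*\<close>-type space this probability is 1 or 1/2 according to bit
  \<open>\<beta>\<close> of her record, where \<open>A\<close> is the coin for \<open>\<beta> = 0\<close>, bit \<open>\<gamma>\<close> of the other agent for
  \<open>\<beta> = \<gamma> + 1\<close>, and the \<open>\<beta>\<close>-parity of the other agent for limit \<open>\<beta>\<close>. So the bits are
  expressible by well-founded induction on \<open>\<beta>\<close>, each one level deeper than its event.
  A \<open>\<lambda>\<close>-parity is odd iff some bit \<open>\<delta> < \<lambda>\<close> with \<open>\<delta> + 1\<close> odd is the last 1 below \<open>\<lambda>\<close>,
  a disjunction of fewer than \<open>\<kappa>\<close> conjunctions of fewer than \<open>\<kappa>\<close> bits, of depth \<open>\<lambda>\<close>.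
\<close>

section \<open>Ordinals below a regular cardinal\<close>

lemma regular_ex_greater:
  assumes "regular_infinite_cardinal TYPE('k::wellorder)"
  shows "\<exists>y. (x::'k) < y"
proof -
  have "infinite (UNIV::'k set)" using assms unfolding regular_infinite_cardinal_def by blast
  then have "{x} \<prec> (UNIV::'k set)" by (intro finite_lesspoll_infinite) simp_all
  then show ?thesis using assms unfolding regular_infinite_cardinal_def by blast
qed

lemma regular_finite_lesspoll:
  assumes "regular_infinite_cardinal TYPE('k::wellorder)" "finite (S::'k set)"
  shows "S \<prec> (UNIV::'k set)"
  using assms finite_lesspoll_infinite unfolding regular_infinite_cardinal_def by blast

lemma regular_bounded_lesspoll:
  assumes "regular_infinite_cardinal TYPE('k::wellorder)" "S \<subseteq> {y. y < (x::'k)}"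
  shows "S \<prec> (UNIV::'k set)"
proof -
  have "{y. y < x} \<prec> (UNIV::'k set)" using assms(1) unfolding regular_infinite_cardinal_def by blast
  with assms(2) show ?thesis using subset_imp_lepoll lesspoll_trans1 by blast
qed

lemma ord0_le: "ord0 \<le> (x::'k::wellorder)"
  unfolding ord0_def by (rule Least_le) simp

lemma osucc_leI: "(x::'k::wellorder) < y \<Longrightarrow> osucc x \<le> y"
  unfolding osucc_def by (rule Least_le)

lemma less_osuccI: "(x::'k::wellorder) < y \<Longrightarrow> x < osucc x"
  unfolding osucc_def by (rule LeastI)

lemma less_osucc:
  assumes "regular_infinite_cardinal TYPE('k::wellorder)"
  shows "(x::'k) < osucc x"
  using regular_ex_greater[OF assms] less_osuccI by blast

lemma is_successor_osucc: "(x::'k::wellorder) < y \<Longrightarrow> is_successor (osucc x)"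
  unfolding is_successor_def using less_osuccI osucc_leI not_le by metis

lemma is_successorE:
  assumes "is_successor (b::'k::wellorder)"
  obtains c where "b = osucc c" "c < b"
proof -
  obtain c where c: "c < b" "\<not> (\<exists>z. c < z \<and> z < b)" using assms unfolding is_successor_def by blast
  have "osucc c = b"
    using osucc_leI[OF c(1)] less_osuccI[OF c(1)] c(2) by (metis order.not_eq_order_implies_strict)
  with c(1) show thesis using that by metis
qed

lemma ordinal_cases:
  fixes b :: "'k::wellorder"
  obtains "b = ord0" | "is_limit b" | c where "b = osucc c" "c < b"
proof (cases "b = ord0")
  case False
  then have "ord0 < b" using ord0_le[of b] by simp
  then show thesis using that is_successorE unfolding is_limit_def by blast
qed

lemma osucc_less_limit:
  assumes "is_limit l" "(b::'k::wellorder) < l"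
  shows "osucc b < l"
  using osucc_leI[OF assms(2)] is_successor_osucc[OF assms(2)] assms(1)
  unfolding is_limit_def by (metis order.not_eq_order_implies_strict)

lemma Least_osucc_bound_limit:
  assumes "is_limit l" "(d::'k::wellorder) < l"
  shows "(LEAST x. \<forall>b. d \<le> b \<and> b < l \<longrightarrow> osucc b \<le> x) = l"
proof (rule Least_equality)
  fix y assume y: "\<forall>b. d \<le> b \<and> b < l \<longrightarrow> osucc b \<le> y"
  show "l \<le> y"
  proof (rule ccontr)
    assume "\<not> l \<le> y"
    then have "max d y < l" using assms(2) by simp
    moreover from this have "osucc (max d y) \<le> y" using y max.cobounded1 by blast
    ultimately show False using less_osuccI by (meson leD le_less_trans max.cobounded2)
  qed
qed (auto intro: osucc_leI)

lemma ord_even_ord0: "ord_even (ord0::'k::wellorder)"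
proof -
  have "\<not> is_successor (ord0::'k)" unfolding is_successor_def using ord0_le not_le by blast
  then show ?thesis unfolding ord_even_def by (metis funpow_0 even_zero)
qed

lemma not_ord_even_osucc_ord0:
  assumes reg: "regular_infinite_cardinal TYPE('k::wellorder)"
  shows "\<not> ord_even (osucc (ord0::'k))"
proof
  assume "ord_even (osucc (ord0::'k))"
  then obtain l n where l: "\<not> is_successor l" "osucc (ord0::'k) = (osucc ^^ n) l" "even n"
    unfolding ord_even_def by blast
  show False
  proof (cases n)
    case 0
    then show False using l is_successor_osucc[OF less_osucc[OF reg]] by (metis funpow_0)
  next
    case (Suc m)
    with l(3) obtain k where "n = Suc (Suc k)" by (cases m) auto
    then have "osucc ord0 = osucc (osucc ((osucc ^^ k) l))" using l(2) by simp
    then have "osucc ((osucc ^^ k) l) \<le> ord0"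
      using less_osucc[OF reg] by (metis leD le_less_linear osucc_leI)
    then show False using less_osucc[OF reg] ord0_le by (metis leD le_less_trans)
  qed
qed

section \<open>Parity of a record at a limit\<close>

lemma o_lim_eq_osucc:
  assumes "is_limit l" "(d::'k::wellorder) < l" "r d" "\<forall>b. d < b \<and> b < l \<longrightarrow> \<not> r b"
  shows "o_lim l r = osucc d"
  unfolding o_lim_def
proof (rule Least_equality)
  show "osucc d < l \<and> (\<forall>b. osucc d \<le> b \<and> b < l \<longrightarrow> \<not> r b)"
    using osucc_less_limit[OF assms(1,2)] assms(4) less_osuccI[OF assms(2)] by auto
next
  fix y assume "y < l \<and> (\<forall>b. y \<le> b \<and> b < l \<longrightarrow> \<not> r b)"
  then show "osucc d \<le> y" using assms(2,3) osucc_leI not_le by metis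
qed

lemma o_lim_cases:
  assumes "is_record r" "is_limit (l::'k::wellorder)"
  shows "o_lim l r = ord0 \<or> (\<exists>d<l. r d \<and> (\<forall>b. d < b \<and> b < l \<longrightarrow> \<not> r b))"
proof -
  define g where "g = o_lim l r"
  have "\<exists>g<l. \<forall>b. g \<le> b \<and> b < l \<longrightarrow> \<not> r b" using assms unfolding is_record_def by blast
  then have "g < l \<and> (\<forall>b. g \<le> b \<and> b < l \<longrightarrow> \<not> r b)"
    unfolding g_def o_lim_def by (rule LeastI_ex)
  then have g: "g < l" "\<forall>b. g \<le> b \<and> b < l \<longrightarrow> \<not> r b" by auto
  have g_least: "g \<le> y" if "y < l" "\<forall>b. y \<le> b \<and> b < l \<longrightarrow> \<not> r b" for y
    unfolding g_def o_lim_def using that by (intro Least_le) blast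
  consider "g = ord0" | "is_limit g" | d where "g = osucc d" "d < g"
    by (rule ordinal_cases)
  then show ?thesis
  proof cases
    case 1
    then show ?thesis by (simp add: g_def)
  next
    case 2
    then obtain g' where g': "g' < g" "\<forall>b. g' \<le> b \<and> b < g \<longrightarrow> \<not> r b"
      using assms(1) unfolding is_record_def by blast
    then have "\<forall>b. g' \<le> b \<and> b < l \<longrightarrow> \<not> r b" using g(2) not_le by blast
    then have "g \<le> g'" using g_least g'(1) g(1) by (meson order.strict_trans)
    with g'(1) show ?thesis by simp
  next
    case 3
    have after: "\<not> r b" if "d < b" "b < l" for b
      using g(2) osucc_leI[OF that(1)] that(2) 3(1) by blast
    have "r d"
    proof (rule ccontr)
      assume "\<not> r d"
      then have "\<forall>b. d \<le> b \<and> b < l \<longrightarrow> \<not> r b" using after by (metis order.order_iff_strict)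
      then have "g \<le> d" using g_least 3(2) g(1) by (meson order.strict_trans)
      with 3(2) show False by simp
    qed
    then show ?thesis using after 3(2) g(1) by (meson order.strict_trans)
  qed
qed

lemma not_lpar_even_iff:
  assumes "is_record r" "is_limit (l::'k::wellorder)"
  shows "\<not> lpar_even l r \<longleftrightarrow>
    (\<exists>d<l. \<not> ord_even (osucc d) \<and> r d \<and> (\<forall>b. d < b \<and> b < l \<longrightarrow> \<not> r b))"
  unfolding lpar_even_def using o_lim_cases[OF assms] o_lim_eq_osucc[OF assms(2)] ord_even_ord0
  by metis

section \<open>Certainty whether an expression holds\<close>

lemma is_record_X: "u \<in> W \<Longrightarrow> is_record (X i u)"
  by (cases i) (simp_all add: W_def)

lemma sem_subset_W: "sem T \<phi> \<subseteq> W"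
  by (induction \<phi>) auto

lemma sem_Neg_Collect: "sem T \<phi> = {u\<in>W. Q u} \<Longrightarrow> sem T (Neg \<phi>) = {u\<in>W. \<not> Q u}"
  by auto

definition Disj :: "'k::wellorder kexp \<Rightarrow> 'k kexp \<Rightarrow> 'k kexp" where
  "Disj \<phi> \<psi> = Neg (Conj {ord0, osucc ord0} (\<lambda>g. if g = ord0 then Neg \<phi> else Neg \<psi>))"

lemma kexp_wf_Disj:
  assumes "regular_infinite_cardinal TYPE('k::wellorder)" "kexp_wf \<phi>" "kexp_wf \<psi>"
  shows "kexp_wf (Disj \<phi> \<psi> :: 'k kexp)"
  unfolding Disj_def using assms
  by (intro kexp_wf.intros regular_finite_lesspoll) (auto intro: kexp_wf.intros)

lemma dp_Disj:
  assumes "regular_infinite_cardinal TYPE('k::wellorder)"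
  shows "dp (Disj \<phi> \<psi> :: 'k kexp) = max (dp \<phi>) (dp \<psi>)"
proof -
  have "osucc ord0 \<noteq> (ord0::'k)" using less_osucc[OF assms, of ord0] by simp
  then have "dp (Disj \<phi> \<psi>) = (LEAST x. dp \<phi> \<le> x \<and> dp \<psi> \<le> x)"
    unfolding Disj_def by simp
  also have "\<dots> = max (dp \<phi>) (dp \<psi>)"
    by (rule Least_equality) auto
  finally show ?thesis .
qed

lemma sem_Disj:
  assumes "regular_infinite_cardinal TYPE('k::wellorder)"
  shows "sem T (Disj \<phi> \<psi> :: 'k kexp) = sem T \<phi> \<union> sem T \<psi>"
  unfolding Disj_def using sem_subset_W[of T] less_osucc[OF assms, of ord0] by auto

definition Sure_whether :: "agent \<Rightarrow> 'k::wellorder kexp \<Rightarrow> 'k kexp" where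
  "Sure_whether i \<phi> = Disj (Bel i 1 \<phi>) (Bel i 1 (Neg \<phi>))"

lemma kexp_wf_Sure_whether:
  assumes "regular_infinite_cardinal TYPE('k::wellorder)" "kexp_wf \<phi>"
  shows "kexp_wf (Sure_whether i \<phi> :: 'k kexp)"
  unfolding Sure_whether_def using assms by (intro kexp_wf_Disj kexp_wf.intros) auto

lemma dp_Sure_whether:
  assumes "regular_infinite_cardinal TYPE('k::wellorder)"
  shows "dp (Sure_whether i \<phi> :: 'k kexp) = osucc (dp \<phi>)"
  unfolding Sure_whether_def by (simp add: dp_Disj[OF assms])

lemma fa_prob_sure_whether_iff:
  assumes "fa_prob \<Omega> \<mu>" "\<mu> {u\<in>\<Omega>. Q u = Q x} = half_or_one c"
  shows "(1 \<le> \<mu> {u\<in>\<Omega>. Q u} \<or> 1 \<le> \<mu> {u\<in>\<Omega>. \<not> Q u}) \<longleftrightarrow> c"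
proof -
  have additive: "\<forall>A B. A \<subseteq> \<Omega> \<and> B \<subseteq> \<Omega> \<and> A \<inter> B = {} \<longrightarrow> \<mu> (A \<union> B) = \<mu> A + \<mu> B"
    using assms(1) unfolding fa_prob_def by blast
  have "\<mu> ({u\<in>\<Omega>. Q u} \<union> {u\<in>\<Omega>. \<not> Q u}) = \<mu> {u\<in>\<Omega>. Q u} + \<mu> {u\<in>\<Omega>. \<not> Q u}"
    by (rule additive[rule_format]) auto
  moreover have "{u\<in>\<Omega>. Q u} \<union> {u\<in>\<Omega>. \<not> Q u} = \<Omega>" by blast
  ultimately have sum: "\<mu> {u\<in>\<Omega>. Q u} + \<mu> {u\<in>\<Omega>. \<not> Q u} = 1"
    using assms(1) unfolding fa_prob_def by simp
  show ?thesis
  proof (cases "Q x")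
    case True
    then have "\<mu> {u\<in>\<Omega>. Q u} = half_or_one c" using assms(2) by simp
    with sum show ?thesis by (cases c) (simp_all add: half_or_one_def)
  next
    case False
    then have "\<mu> {u\<in>\<Omega>. \<not> Q u} = half_or_one c" using assms(2) by simp
    with sum show ?thesis by (cases c) (simp_all add: half_or_one_def)
  qed
qed

lemma star_type_space_fa_prob: "star_type_space T \<Longrightarrow> w \<in> W \<Longrightarrow> fa_prob W (T i w)"
  unfolding star_type_space_def by blast

lemma star_type_space_coin: "star_type_space T \<Longrightarrow> w \<in> W \<Longrightarrow>
    T i w {u\<in>W. fst u = fst w} = half_or_one (X i w ord0)"
  unfolding star_type_space_def by blast

lemma star_type_space_bit: "star_type_space T \<Longrightarrow> w \<in> W \<Longrightarrow>
    T i w {u\<in>W. X (other i) u b = X (other i) w b} = half_or_one (X i w (osucc b))"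
  unfolding star_type_space_def by blast

lemma star_type_space_parity: "star_type_space T \<Longrightarrow> w \<in> W \<Longrightarrow> is_limit l \<Longrightarrow>
    T i w {u\<in>W. lpar_even l (X (other i) u) = lpar_even l (X (other i) w)} = half_or_one (X i w l)"
  unfolding star_type_space_def by blast

lemma sem_Sure_whether:
  assumes "regular_infinite_cardinal TYPE('k::wellorder)" "star_type_space T"
    and "sem T \<phi> = {u\<in>W. Q u}"
    and "\<And>w. w \<in> W \<Longrightarrow> T i w {u\<in>W. Q u = Q w} = half_or_one (c w)"
  shows "sem T (Sure_whether i \<phi> :: 'k kexp) = {w\<in>W. c w}"
proof -
  have "W - sem T \<phi> = {u\<in>W. \<not> Q u}" using assms(3) by auto
  then have "sem T (Sure_whether i \<phi>) = {w\<in>W. 1 \<le> T i w {u\<in>W. Q u} \<or> 1 \<le> T i w {u\<in>W. \<not> Q u}}"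
    unfolding Sure_whether_def sem_Disj[OF assms(1)] using assms(3) by auto
  also have "\<dots> = {w\<in>W. c w}"
    using fa_prob_sure_whether_iff[OF star_type_space_fa_prob[OF assms(2)] assms(4)] by blast
  finally show ?thesis .
qed

section \<open>Expressing bits and limit parities\<close>

definition expresses_bit ::
    "(agent \<Rightarrow> 'k::wellorder world \<Rightarrow> 'k world set \<Rightarrow> real) \<Rightarrow> agent \<Rightarrow> 'k \<Rightarrow> 'k kexp \<Rightarrow> bool" where
  "expresses_bit T i b \<phi> \<longleftrightarrow> kexp_wf \<phi> \<and> dp \<phi> = osucc b \<and> sem T \<phi> = {u\<in>W. X i u b}"

lemma expresses_bit_Sure_whether:
  assumes "regular_infinite_cardinal TYPE('k::wellorder)" "star_type_space T"
    and "kexp_wf \<psi>" "dp \<psi> = b" "sem T \<psi> = {u\<in>W. Q u}"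
    and "\<And>w. w \<in> W \<Longrightarrow> T i w {u\<in>W. Q u = Q w} = half_or_one (X i w b)"
  shows "expresses_bit T i b (Sure_whether i \<psi> :: 'k kexp)"
  unfolding expresses_bit_def
  using kexp_wf_Sure_whether[OF assms(1,3)] dp_Sure_whether[OF assms(1)] assms(4)
    sem_Sure_whether[OF assms(1,2,5,6)] by simp

definition Last_one :: "('k::wellorder \<Rightarrow> 'k kexp) \<Rightarrow> 'k \<Rightarrow> 'k \<Rightarrow> 'k kexp" where
  "Last_one F l d = Conj {b. d \<le> b \<and> b < l} (\<lambda>b. if b = d then F b else Neg (F b))"

definition Lpar_odd :: "('k::wellorder \<Rightarrow> 'k kexp) \<Rightarrow> 'k \<Rightarrow> 'k kexp" where
  "Lpar_odd F l = Neg (Conj {d. d < l \<and> \<not> ord_even (osucc d)} (\<lambda>d. Neg (Last_one F l d)))"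

context
  fixes T :: "agent \<Rightarrow> 'k::wellorder world \<Rightarrow> 'k world set \<Rightarrow> real"
    and i :: agent and l :: 'k and F :: "'k \<Rightarrow> 'k kexp"
  assumes reg: "regular_infinite_cardinal TYPE('k)" and lim: "is_limit l"
    and F: "\<And>b. b < l \<Longrightarrow> expresses_bit T i b (F b)"
begin

lemma kexp_wf_Last_one:
  assumes "d < l"
  shows "kexp_wf (Last_one F l d)"
  unfolding Last_one_def
proof (rule kexp_wf.intros)
  show "{b. d \<le> b \<and> b < l} \<noteq> {}" using assms by blast
  show "{b. d \<le> b \<and> b < l} \<prec> (UNIV :: 'k set)" by (rule regular_bounded_lesspoll[OF reg]) blast
  show "\<forall>b\<in>{b. d \<le> b \<and> b < l}. kexp_wf (if b = d then F b else Neg (F b))"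
    using F by (simp add: expresses_bit_def kexp_wf.intros)
qed

lemma dp_Last_one:
  assumes "d < l"
  shows "dp (Last_one F l d) = l"
proof -
  have "dp (if b = d then F b else Neg (F b)) = osucc b" if "b < l" for b
    using F[OF that] by (cases "b = d") (simp_all add: expresses_bit_def)
  then have "dp (Last_one F l d) = (LEAST x. \<forall>b. d \<le> b \<and> b < l \<longrightarrow> osucc b \<le> x)"
    unfolding Last_one_def by simp
  also have "\<dots> = l" using Least_osucc_bound_limit[OF lim assms] .
  finally show ?thesis .
qed

lemma sem_Last_one:
  assumes "d < l"
  shows "sem T (Last_one F l d) = {u\<in>W. X i u d \<and> (\<forall>b. d < b \<and> b < l \<longrightarrow> \<not> X i u b)}"
proof -
  have "sem T (if b = d then F b else Neg (F b)) = {u\<in>W. X i u b = (b = d)}" if "b < l" for b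
    using F[OF that] by (auto simp: expresses_bit_def)
  then have "sem T (Last_one F l d) = {u\<in>W. \<forall>b. d \<le> b \<and> b < l \<longrightarrow> X i u b = (b = d)}"
    unfolding Last_one_def by auto
  also have "\<dots> = {u\<in>W. X i u d \<and> (\<forall>b. d < b \<and> b < l \<longrightarrow> \<not> X i u b)}"
    using assms by (force simp: le_less)
  finally show ?thesis .
qed

lemma ord0_odd_osucc_below: "ord0 \<in> {d. d < l \<and> \<not> ord_even (osucc d)}"
  using lim ord0_le not_ord_even_osucc_ord0[OF reg] unfolding is_limit_def
  by (metis le_less_trans mem_Collect_eq)

lemma kexp_wf_Lpar_odd: "kexp_wf (Lpar_odd F l)"
  unfolding Lpar_odd_def
proof (intro kexp_wf.intros)
  show "{d. d < l \<and> \<not> ord_even (osucc d)} \<noteq> {}" using ord0_odd_osucc_below by blast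
  show "{d. d < l \<and> \<not> ord_even (osucc d)} \<prec> (UNIV :: 'k set)"
    by (rule regular_bounded_lesspoll[OF reg]) blast
  show "\<forall>d\<in>{d. d < l \<and> \<not> ord_even (osucc d)}. kexp_wf (Neg (Last_one F l d))"
    by (simp add: kexp_wf_Last_one kexp_wf.intros)
qed

lemma dp_Lpar_odd: "dp (Lpar_odd F l) = l"
proof -
  have "\<exists>d<l. \<not> ord_even (osucc d)" using ord0_odd_osucc_below by blast
  then have "dp (Lpar_odd F l) = (LEAST x. l \<le> x)"
    unfolding Lpar_odd_def by (simp add: dp_Last_one)
  then show ?thesis by (simp add: Least_equality)
qed

lemma sem_Lpar_odd: "sem T (Lpar_odd F l) = {u\<in>W. \<not> lpar_even l (X i u)}"
proof -
  have "sem T (Lpar_odd F l) = {u\<in>W. \<exists>d<l. \<not> ord_even (osucc d) \<and> u \<in> sem T (Last_one F l d)}"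
    unfolding Lpar_odd_def by auto
  also have "\<dots> = {u\<in>W. \<not> lpar_even l (X i u)}"
  proof (intro Collect_cong conj_cong refl)
    fix u :: "'k world" assume u: "u \<in> W"
    have "u \<in> sem T (Last_one F l d) \<longleftrightarrow> X i u d \<and> (\<forall>b. d < b \<and> b < l \<longrightarrow> \<not> X i u b)"
      if "d < l" for d
      using sem_Last_one[OF that] u by blast
    then show "(\<exists>d<l. \<not> ord_even (osucc d) \<and> u \<in> sem T (Last_one F l d)) \<longleftrightarrow>
        \<not> lpar_even l (X i u)"
      unfolding not_lpar_even_iff[OF is_record_X[OF u] lim] by auto
  qed
  finally show ?thesis .
qed

end

lemma coin_eq_Hd_iff: "((x = Hd) \<longleftrightarrow> (y = Hd)) \<longleftrightarrow> x = y"
  by (cases x; cases y) simp_all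

lemma bit_expressible:
  assumes reg: "regular_infinite_cardinal TYPE('k::wellorder)" and st: "star_type_space T"
  shows "\<exists>\<phi>. expresses_bit T i (b::'k) \<phi>"
proof (induction b arbitrary: i rule: less_induct)
  case (less b)
  consider "b = ord0" | "is_limit b" | c where "b = osucc c" "c < b"
    by (rule ordinal_cases)
  then show ?case
  proof cases
    case 1
    have "expresses_bit T i b (Sure_whether i (Prim {Hd}))"
    proof (rule expresses_bit_Sure_whether[OF reg st, where Q = "\<lambda>u. fst u = Hd"])
      fix w :: "'k world" assume "w \<in> W"
      then show "T i w {u\<in>W. (fst u = Hd) = (fst w = Hd)} = half_or_one (X i w b)"
        using star_type_space_coin[OF st] 1 by (simp add: coin_eq_Hd_iff)
    qed (use 1 in \<open>simp_all add: kexp_wf.intros\<close>)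
    then show ?thesis by blast
  next
    case 2
    have "\<forall>c\<in>{..<b}. \<exists>\<phi>. expresses_bit T (other i) c \<phi>" using less.IH by blast
    then obtain F where "\<forall>c\<in>{..<b}. expresses_bit T (other i) c (F c)"
      using bchoice by blast
    then have F: "\<And>c. c < b \<Longrightarrow> expresses_bit T (other i) c (F c)" by simp
    have "expresses_bit T i b (Sure_whether i (Neg (Lpar_odd F b)))"
    proof (rule expresses_bit_Sure_whether[OF reg st, where Q = "\<lambda>u. lpar_even b (X (other i) u)"])
      show "kexp_wf (Neg (Lpar_odd F b))"
        using kexp_wf_Lpar_odd[OF reg 2 F] by (rule kexp_wf.intros)
      show "dp (Neg (Lpar_odd F b)) = b" using dp_Lpar_odd[OF reg 2 F] by simp
      show "sem T (Neg (Lpar_odd F b)) = {u\<in>W. lpar_even b (X (other i) u)}"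
        using sem_Neg_Collect[OF sem_Lpar_odd[OF reg 2 F]] by simp
      show "T i w {u\<in>W. lpar_even b (X (other i) u) = lpar_even b (X (other i) w)} = half_or_one (X i w b)"
        if "w \<in> W" for w
        using star_type_space_parity[OF st that 2] .
    qed
    then show ?thesis by blast
  next
    case 3
    obtain \<psi> where \<psi>: "expresses_bit T (other i) c \<psi>" using less.IH[OF 3(2)] by blast
    have "expresses_bit T i b (Sure_whether i \<psi>)"
    proof (rule expresses_bit_Sure_whether[OF reg st, where Q = "\<lambda>u. X (other i) u c"])
      show "T i w {u\<in>W. X (other i) u c = X (other i) w c} = half_or_one (X i w b)"
        if "w \<in> W" for w
        using star_type_space_bit[OF st that] 3(1) by simp
    qed (use \<psi> 3(1) in \<open>simp_all add: expresses_bit_def\<close>)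
    then show ?thesis by blast
  qed
qed

theorem lemma9:
  fixes T :: "agent \<Rightarrow> 'k::wellorder world \<Rightarrow> 'k world set \<Rightarrow> real"
  assumes "regular_infinite_cardinal TYPE('k)"
    and "star_type_space T"
  shows "(sem T (Prim {Hd}) = {u\<in>W. fst u = Hd} \<and> sem T (Prim {Tl}) = {u\<in>W. fst u = Tl}
         \<and> dp (Prim {Hd} :: 'k kexp) = ord0 \<and> dp (Prim {Tl} :: 'k kexp) = ord0)
    \<and> (\<forall>i (b::'k). \<exists>\<phi>1 \<phi>0. kexp_wf \<phi>1 \<and> kexp_wf \<phi>0
           \<and> dp \<phi>1 = osucc b \<and> dp \<phi>0 = osucc b
           \<and> sem T \<phi>1 = {u\<in>W. X i u b} \<and> sem T \<phi>0 = {u\<in>W. \<not> X i u b})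
    \<and> (\<forall>i (l::'k). is_limit l \<longrightarrow> (\<exists>\<phi>e \<phi>o. kexp_wf \<phi>e \<and> kexp_wf \<phi>o
           \<and> dp \<phi>e = l \<and> dp \<phi>o = l
           \<and> sem T \<phi>e = {u\<in>W. lpar_even l (X i u)}
           \<and> sem T \<phi>o = {u\<in>W. \<not> lpar_even l (X i u)}))"
proof (intro conjI allI impI)
  fix i
  have "\<forall>b. \<exists>\<phi>. expresses_bit T i b \<phi>" using bit_expressible[OF assms] by blast
  then obtain F where F: "\<And>b. expresses_bit T i b (F b)" by (metis choice)
  show "\<exists>\<phi>1 \<phi>0. kexp_wf \<phi>1 \<and> kexp_wf \<phi>0 \<and> dp \<phi>1 = osucc b \<and> dp \<phi>0 = osucc b
      \<and> sem T \<phi>1 = {u\<in>W. X i u b} \<and> sem T \<phi>0 = {u\<in>W. \<not> X i u b}" for b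
    using F[of b] unfolding expresses_bit_def
    by - (rule exI[of _ "F b"], rule exI[of _ "Neg (F b)"], auto intro: kexp_wf.intros(2))
  show "\<exists>\<phi>e \<phi>o. kexp_wf \<phi>e \<and> kexp_wf \<phi>o \<and> dp \<phi>e = l \<and> dp \<phi>o = l
      \<and> sem T \<phi>e = {u\<in>W. lpar_even l (X i u)} \<and> sem T \<phi>o = {u\<in>W. \<not> lpar_even l (X i u)}"
    if "is_limit l" for l
    using kexp_wf_Lpar_odd[OF assms(1) that F] dp_Lpar_odd[OF assms(1) that F]
      sem_Lpar_odd[OF assms(1) that F] sem_Neg_Collect[OF sem_Lpar_odd[OF assms(1) that F]]
    by - (rule exI[of _ "Neg (Lpar_odd F l)"], rule exI[of _ "Lpar_odd F l"], simp add: kexp_wf.intros(2))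
qed simp_all

end
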